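(* Let $C\in\mathbb{R}^{r\times n}$, $d\in\mathbb{R}^r$, where the system $Cx\ge d$ contains the constraints $x_j\ge0$ and $-x_j\ge-1$ for all $j\in[n]$, and let $\mathcal{X}=\{x\in\{0,1\}^n\mid Cx\ge d\}\ne\emptyset$. For $i\in[m]$ let $a_{i0}\in\mathbb{R}$, $a_i\in\mathbb{R}^n$ with $a_{i0}+a_i^\top x>0$ for all $x\in\mathcal{X}$, and \[ \mathcal{G}=\Bigl\{(\rho,y)=\bigl((\rho^i)_{i\in[m]},(y^i)_{i\in[m]}\bigr)\Bigm| x\in\mathcal{X},\ (\rho^i,y^i)=\frac{(1,x)}{a_{i0}+a_i^\top x}\ \text{for }i\in[m]\Bigr\}. \] For $k\in[n]$ let $\mathcal{R}^k=\{(\rho,y,u)\mid (\rho^i,y^i,u)\in\mathcal{R}^k_i\ \text{for all } i\in[m]\}$ (with $\mathcal{R}^k_i$ defined in the context). Then \[ \operatorname{proj}_{(\rho,y)}(\mathcal{R}^1)\supseteq\operatorname{proj}_{(\rho,y)}(\mathcal{R}^2)\supseteq\cdots\supseteq\operatorname{proj}_{(\rho,y)}(\mathcal{R}^n)=\operatorname{conv}(\mathcal{G}). \]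
   Context: $\mathrm{RLT}_k(\mathcal{X})$: for each row $c_lx\ge d_l$ of $Cx\ge d$ and each pair of disjoint $S,T\subseteq[n]$ with $|S\cup T|=k$, expand $(c_lx-d_l)\prod_{s\in S}x_s\prod_{t\in T}(1-x_t)\ge0$, reduce to a multilinear polynomial using $x_j^2=x_j$, and replace each monomial $\prod_{j\in e}x_j$ ($e\ne\emptyset$) by a variable $z_e$ (the empty monomial is $1$); the variables are $z_e$ for $e\subseteq[n]$, $1\le|e|\le\min(k+1,n)$. For $\rho\ge0$, "$w\in\rho\,\mathrm{RLT}_k(\mathcal{X})$" means $w=(w_e)$ satisfies these linear inequalities with $z$ replaced by $w$ and every constant term multiplied by $\rho$. For $i\in[m]$, $\mathcal{R}^k_i$ is the set of $(\rho^i,y^i,u)\in\mathbb{R}\times\mathbb{R}^n\times\mathbb{R}^{\{S\subseteq[n]:1\le|S|\le k\}}$ such that there is $w^i$ with: $\rho^i\ge0$, $w^i\in\rho^i\,\mathrm{RLT}_k(\mathcal{X})$, $y^i_j=w^i_{\{j\}}$ for $j\in[n]$, $a_{i0}\rho^i+a_i^\top y^i=1$, and for every $S\subseteq[n]$ with $1\le|S|\le k$: $u_S=\bigl(a_{i0}+\sum_{j\in S}a_{ij}\bigr)w^i_S+\sum_{r\in[n]\setminus S}a_{ir}w^i_{S\cup\{r\}}$. ($u_S$ models $\prod_{j\in S}x_j$ and $w^i_S$ models $\prod_{j\in S}x_j/(a_{i0}+a_i^\top x)$.) *)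

theory Defs
  imports "HOL-Analysis.Analysis"
begin

text \<open>Conventions: the index set [n] is the finite type 'n, [m] is 'm, the rows [r] are 'r.
  Monomial variables z_e are modelled by a function on sets of indices; the empty monomial
  is mapped to the (scaled) constant rho.\<close>

definition lin_mono :: "real \<Rightarrow> ('n set \<Rightarrow> real) \<Rightarrow> 'n set \<Rightarrow> real" where
  "lin_mono \<rho> w e = (if e = {} then \<rho> else w e)"

text \<open>The product (c_l x - d_l) prod_S x_s prod_T (1 - x_t) is expanded as
  sum over U subset T of (-1)^|U| (sum_j c_lj x^(S u U u {j}) - d_l x^(S u U)).\<close>

definition in_scaled_RLT ::
  "real^'n::finite^'r::finite \<Rightarrow> real^'r \<Rightarrow> nat \<Rightarrow> real \<Rightarrow> ('n set \<Rightarrow> real) \<Rightarrow> bool" where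
  "in_scaled_RLT C d k \<rho> w \<longleftrightarrow>
     (\<forall>l S T. S \<inter> T = {} \<and> card (S \<union> T) = k \<longrightarrow>
        0 \<le> (\<Sum>U\<in>Pow T. (-1) ^ card U *
               ((\<Sum>j\<in>UNIV. C$l$j * lin_mono \<rho> w (insert j (S \<union> U)))
                - d$l * lin_mono \<rho> w (S \<union> U))))"

definition R_ki ::
  "real^'n::finite^'r::finite \<Rightarrow> real^'r \<Rightarrow> real^'m::finite \<Rightarrow> real^'n^'m \<Rightarrow> nat \<Rightarrow> 'm
     \<Rightarrow> (real \<times> (real^'n) \<times> ('n set \<Rightarrow> real)) set" where
  "R_ki C d a0 a k i = {(\<rho>i, yi, u). \<exists>w.
      \<rho>i \<ge> 0 \<and> in_scaled_RLT C d k \<rho>i w \<and>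
      (\<forall>j. yi$j = w {j}) \<and>
      a0$i * \<rho>i + (a$i) \<bullet> yi = 1 \<and>
      (\<forall>S. S \<noteq> {} \<and> card S \<le> k \<longrightarrow>
         u S = (a0$i + (\<Sum>j\<in>S. a$i$j)) * w S + (\<Sum>r\<in>-S. a$i$r * w (insert r S)))}"

definition R_k ::
  "real^'n::finite^'r::finite \<Rightarrow> real^'r \<Rightarrow> real^'m::finite \<Rightarrow> real^'n^'m \<Rightarrow> nat
     \<Rightarrow> ((real^'m) \<times> (real^'n^'m) \<times> ('n set \<Rightarrow> real)) set" where
  "R_k C d a0 a k = {(\<rho>, y, u). \<forall>i. (\<rho>$i, y$i, u) \<in> R_ki C d a0 a k i}"

definition proj_R_k ::
  "real^'n::finite^'r::finite \<Rightarrow> real^'r \<Rightarrow> real^'m::finite \<Rightarrow> real^'n^'m \<Rightarrow> nat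
     \<Rightarrow> ((real^'m) \<times> (real^'n^'m)) set" where
  "proj_R_k C d a0 a k = {(\<rho>, y). \<exists>u. (\<rho>, y, u) \<in> R_k C d a0 a k}"

definition feas_X :: "real^'n::finite^'r::finite \<Rightarrow> real^'r \<Rightarrow> (real^'n) set" where
  "feas_X C d = {x. (\<forall>j. x$j \<in> {0, 1}) \<and> (\<forall>l. (C *v x)$l \<ge> d$l)}"

definition G_set ::
  "real^'n::finite^'r::finite \<Rightarrow> real^'r \<Rightarrow> real^'m::finite \<Rightarrow> real^'n^'m
     \<Rightarrow> ((real^'m) \<times> (real^'n^'m)) set" where
  "G_set C d a0 a = (\<lambda>x. ((\<chi> i. 1 / (a0$i + a$i \<bullet> x)), (\<chi> i. \<chi> j. x$j / (a0$i + a$i \<bullet> x))))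
                      ` feas_X C d"

end

theory Submission
  imports Defs
begin

text \<open>Write a point of the level-n RLT relaxation in Moebius coordinates: \<lambda>(S) is the
  linearization of \<Prod>(x_j, j \<in> S) \<Prod>(1 - x_j, j \<notin> S), and every monomial variable is the sum
  of the \<lambda>(S) over the S containing it. At level n the RLT inequality of a row c_l x \<ge> d_l for
  the pair (S, -S) reads (c_l 1_S - d_l) \<lambda>(S) \<ge> 0, so the bound rows force \<lambda> \<ge> 0 and the other
  rows force \<lambda>(S) = 0 unless 1_S is feasible. The lifted vector (1, u), shared by all i, has
  Moebius coefficients \<lambda>_i(S) (a_i0 + a_i 1_S); these are therefore independent of i, and they
  are the convex weights writing (\<rho>, y) as a combination of points of G. Conversely the points
  of G lie in every projection, and the projections are convex. Each RLT inequality of level k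
  is the sum of two of level k + 1, which gives the chain.\<close>

text \<open>Applied to the linearized monomials, mobius_diff F S T is the linearization of
  \<Prod>(x_j, j \<in> S) \<Prod>(1 - x_j, j \<in> T).\<close>

definition mobius_diff :: "('a set \<Rightarrow> 'b::comm_ring_1) \<Rightarrow> 'a set \<Rightarrow> 'a set \<Rightarrow> 'b" where
  "mobius_diff F S T = (\<Sum>U\<in>Pow T. (-1) ^ card U * F (S \<union> U))"

lemma mobius_diff_insert:
  assumes "finite T" "t \<notin> T"
  shows "mobius_diff F S (insert t T) = mobius_diff F S T - mobius_diff F (insert t S) T"
proof -
  have inj: "inj_on (insert t) (Pow T)"
    using assms(2) by (auto simp: inj_on_def)
  have disj: "Pow T \<inter> insert t ` Pow T = {}"
    using assms(2) by blast
  have "mobius_diff F S (insert t T) = (\<Sum>U\<in>Pow T. (-1) ^ card U * F (S \<union> U))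
        + (\<Sum>U\<in>Pow T. (-1) ^ card (insert t U) * F (S \<union> insert t U))"
    unfolding mobius_diff_def Pow_insert using assms(1) disj
    by (simp add: sum.union_disjoint sum.reindex[OF inj])
  also have "(\<Sum>U\<in>Pow T. (-1) ^ card (insert t U) * F (S \<union> insert t U))
      = - (\<Sum>U\<in>Pow T. (-1) ^ card U * F (insert t S \<union> U))"
    unfolding sum_negf[symmetric]
  proof (rule sum.cong)
    fix U assume "U \<in> Pow T"
    then have "finite U" "t \<notin> U"
      using assms finite_subset by auto
    then show "(-1) ^ card (insert t U) * F (S \<union> insert t U) = - ((-1) ^ card U * F (insert t S \<union> U))"
      by simp
  qed simp
  finally show ?thesis
    unfolding mobius_diff_def by simp
qed

lemma mobius_diff_sum: "mobius_diff (\<lambda>A. \<Sum>x\<in>X. f x A) S T = (\<Sum>x\<in>X. mobius_diff (f x) S T)"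
  unfolding mobius_diff_def by (simp add: sum_distrib_left sum.swap[of _ X])

lemma mobius_diff_scale: "mobius_diff (\<lambda>A. c * f A) S T = c * mobius_diff f S T"
  unfolding mobius_diff_def by (simp add: sum_distrib_left algebra_simps)

lemma mobius_diff_add: "mobius_diff (\<lambda>A. f A + g A) S T = mobius_diff f S T + mobius_diff g S T"
  unfolding mobius_diff_def by (simp add: sum.distrib algebra_simps)

lemma mobius_diff_diff: "mobius_diff (\<lambda>A. f A - g A) S T = mobius_diff f S T - mobius_diff g S T"
  unfolding mobius_diff_def by (simp add: sum_subtractf algebra_simps)

lemma mobius_diff_insert_arg_mem:
  "j \<in> S \<Longrightarrow> mobius_diff (\<lambda>A. F (insert j A)) S T = mobius_diff F S T"
  unfolding mobius_diff_def by (simp add: insert_absorb)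

lemma mobius_diff_insert_arg_upper:
  assumes "finite T" "j \<in> T"
  shows "mobius_diff (\<lambda>A. F (insert j A)) S T = 0"
proof -
  have "mobius_diff (\<lambda>A. F (insert j A)) (insert j S) (T - {j}) = mobius_diff (\<lambda>A. F (insert j A)) S (T - {j})"
    unfolding mobius_diff_def by simp
  then show ?thesis
    using mobius_diff_insert[of "T - {j}" j "\<lambda>A. F (insert j A)" S] assms by (simp add: insert_absorb)
qed

lemma mobius_diff_indicator:
  assumes "finite T"
  shows "mobius_diff (\<lambda>A. if A \<subseteq> R then 1 else 0) S T = (if S \<subseteq> R \<and> T \<inter> R = {} then 1 else 0)"
  using assms
proof (induction T arbitrary: S rule: finite_induct)
  case empty
  then show ?case by (simp add: mobius_diff_def)
qed (simp add: mobius_diff_insert)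

lemma sum_Pow_mobius_diff:
  assumes "finite T"
  shows "(\<Sum>V\<in>Pow T. mobius_diff F (e \<union> V) (T - V)) = F e"
  using assms
proof (induction T rule: finite_induct)
  case empty
  then show ?case by (simp add: mobius_diff_def)
next
  case (insert t T)
  have inj: "inj_on (insert t) (Pow T)"
    using insert(2) by (auto simp: inj_on_def)
  have disj: "Pow T \<inter> insert t ` Pow T = {}"
    using insert(2) by blast
  have pair: "mobius_diff F (e \<union> V) (insert t T - V) + mobius_diff F (e \<union> insert t V) (insert t T - insert t V)
      = mobius_diff F (e \<union> V) (T - V)" if "V \<in> Pow T" for V
  proof -
    have "insert t T - V = insert t (T - V)" "insert t T - insert t V = T - V"
      using that insert(2) by auto
    then show ?thesis
      using insert(1,2) by (simp add: mobius_diff_insert)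
  qed
  have "(\<Sum>V\<in>Pow (insert t T). mobius_diff F (e \<union> V) (insert t T - V))
     = (\<Sum>V\<in>Pow T. mobius_diff F (e \<union> V) (insert t T - V)
          + mobius_diff F (e \<union> insert t V) (insert t T - insert t V))"
    unfolding Pow_insert using insert(1) disj
    by (simp add: sum.union_disjoint sum.reindex[OF inj] sum.distrib)
  also have "\<dots> = F e"
    using pair insert(3) by simp
  finally show ?case .
qed

lemma mobius_expansion:
  fixes F :: "'a::finite set \<Rightarrow> 'b::comm_ring_1"
  shows "F e = (\<Sum>S\<in>UNIV. if e \<subseteq> S then mobius_diff F S (-S) else 0)"
proof -
  have "F e = (\<Sum>V\<in>Pow (-e). mobius_diff F (e \<union> V) (-(e \<union> V)))"
    using sum_Pow_mobius_diff[of "-e" F e] by (simp add: Diff_eq Int_commute)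
  also have "\<dots> = (\<Sum>S\<in>{S. e \<subseteq> S}. mobius_diff F S (-S))"
    by (rule sum.reindex_bij_witness[where i="\<lambda>S. S - e" and j="\<lambda>V. e \<union> V"]) auto
  finally show ?thesis
    by (simp add: sum.If_cases)
qed

lemma mobius_diff_unique:
  fixes F \<mu> :: "'a::finite set \<Rightarrow> 'b::comm_ring_1"
  assumes "\<And>e. F e = (\<Sum>S\<in>UNIV. if e \<subseteq> S then \<mu> S else 0)"
  shows "mobius_diff F S (-S) = \<mu> S"
proof -
  have "F = (\<lambda>A. \<Sum>R\<in>UNIV. \<mu> R * (if A \<subseteq> R then 1 else 0))"
    using assms by (intro ext) (simp add: if_distrib cong: if_cong)
  then have "mobius_diff F S (-S) = (\<Sum>R\<in>UNIV. \<mu> R * (if S \<subseteq> R \<and> -S \<inter> R = {} then 1 else 0))"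
    by (simp add: mobius_diff_sum mobius_diff_scale mobius_diff_indicator)
  also have "\<dots> = (\<Sum>R\<in>UNIV. if R = S then \<mu> R else 0)"
    by (intro sum.cong) auto
  finally show ?thesis
    by simp
qed

definition indicator_vec :: "'n set \<Rightarrow> real^'n::finite" where
  "indicator_vec S = (\<chi> j. if j \<in> S then 1 else 0)"

lemma binary_eq_indicator_vec:
  "\<forall>j. x$j \<in> {0, 1::real} \<Longrightarrow> x = indicator_vec {j. x$j = 1}"
  by (auto simp: indicator_vec_def vec_eq_iff)

lemma inner_indicator_vec_split:
  fixes b :: "real^'n::finite"
  assumes "e \<subseteq> S"
  shows "b \<bullet> indicator_vec S = (\<Sum>j\<in>e. b$j) + (\<Sum>r\<in>-e. b$r * (if r \<in> S then 1 else 0))"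
proof -
  have "b \<bullet> indicator_vec S = (\<Sum>j\<in>e. b$j * (if j \<in> S then 1 else 0)) + (\<Sum>r\<in>-e. b$r * (if r \<in> S then 1 else 0))"
    unfolding inner_vec_def indicator_vec_def using sum.subset_diff[of "-e" UNIV] by simp
  also have "(\<Sum>j\<in>e. b$j * (if j \<in> S then 1 else 0)) = (\<Sum>j\<in>e. b$j)"
    using assms by (intro sum.cong) auto
  finally show ?thesis .
qed

text \<open>The Moebius coefficients of the linearization of x^e (c + b x).\<close>

lemma linearized_affine_mobius_expansion:
  fixes L \<mu> :: "'n::finite set \<Rightarrow> real" and b :: "real^'n"
  assumes L: "\<And>e. L e = (\<Sum>S\<in>UNIV. if e \<subseteq> S then \<mu> S else 0)"
  shows "(c + (\<Sum>j\<in>e. b$j)) * L e + (\<Sum>r\<in>-e. b$r * L (insert r e))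
       = (\<Sum>S\<in>UNIV. if e \<subseteq> S then \<mu> S * (c + b \<bullet> indicator_vec S) else 0)"
proof -
  have "(c + (\<Sum>j\<in>e. b$j)) * L e + (\<Sum>r\<in>-e. b$r * L (insert r e))
      = (\<Sum>S\<in>UNIV. (c + (\<Sum>j\<in>e. b$j)) * (if e \<subseteq> S then \<mu> S else 0)
          + (\<Sum>r\<in>-e. b$r * (if insert r e \<subseteq> S then \<mu> S else 0)))"
    by (simp only: L sum_distrib_left sum.distrib sum.swap[where A="-e"])
  also have "\<dots> = (\<Sum>S\<in>UNIV. if e \<subseteq> S then \<mu> S * (c + b \<bullet> indicator_vec S) else 0)"
  proof (intro sum.cong refl)
    fix S
    show "(c + (\<Sum>j\<in>e. b$j)) * (if e \<subseteq> S then \<mu> S else 0)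
        + (\<Sum>r\<in>-e. b$r * (if insert r e \<subseteq> S then \<mu> S else 0))
        = (if e \<subseteq> S then \<mu> S * (c + b \<bullet> indicator_vec S) else 0)"
    proof (cases "e \<subseteq> S")
      case True
      have "(\<Sum>r\<in>-e. b$r * (if insert r e \<subseteq> S then \<mu> S else 0))
          = \<mu> S * (\<Sum>r\<in>-e. b$r * (if r \<in> S then 1 else 0))"
        unfolding sum_distrib_left using True by (intro sum.cong) auto
      then show ?thesis
        using True by (simp add: inner_indicator_vec_split algebra_simps)
    qed (auto intro!: sum.neutral)
  qed
  finally show ?thesis .
qed

definition rlt_row ::
  "real^'n::finite^'r::finite \<Rightarrow> real^'r \<Rightarrow> 'r \<Rightarrow> real \<Rightarrow> ('n set \<Rightarrow> real) \<Rightarrow> 'n set \<Rightarrow> real" where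
  "rlt_row C d l \<rho> w A = (\<Sum>j\<in>UNIV. C$l$j * lin_mono \<rho> w (insert j A)) - d$l * lin_mono \<rho> w A"

lemma in_scaled_RLT_iff_mobius_diff:
  "in_scaled_RLT C d k \<rho> w \<longleftrightarrow>
     (\<forall>l S T. S \<inter> T = {} \<and> card (S \<union> T) = k \<longrightarrow> 0 \<le> mobius_diff (rlt_row C d l \<rho> w) S T)"
  by (simp add: in_scaled_RLT_def mobius_diff_def rlt_row_def)

lemma in_scaled_RLT_Suc_imp:
  fixes C :: "real^'n::finite^'r::finite"
  assumes "k < CARD('n)" and R: "in_scaled_RLT C d (Suc k) \<rho> w"
  shows "in_scaled_RLT C d k \<rho> w"
  unfolding in_scaled_RLT_iff_mobius_diff
proof (intro allI impI)
  fix l and S T :: "'n set"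
  assume ST: "S \<inter> T = {} \<and> card (S \<union> T) = k"
  then have "S \<union> T \<noteq> UNIV"
    using assms(1) by auto
  then obtain t where t: "t \<notin> S \<union> T"
    by auto
  have "card (insert t S \<union> T) = Suc k" "card (S \<union> insert t T) = Suc k"
    using ST t by (auto simp: card_insert_if)
  then have "0 \<le> mobius_diff (rlt_row C d l \<rho> w) (insert t S) T"
      "0 \<le> mobius_diff (rlt_row C d l \<rho> w) S (insert t T)"
    using R ST t unfolding in_scaled_RLT_iff_mobius_diff by auto
  then show "0 \<le> mobius_diff (rlt_row C d l \<rho> w) S T"
    using t by (simp add: mobius_diff_insert)
qed

lemma mobius_diff_rlt_row_complement:
  "mobius_diff (rlt_row C d l \<rho> w) S (-S)
     = ((C *v indicator_vec S)$l - d$l) * mobius_diff (lin_mono \<rho> w) S (-S)"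
proof -
  have "mobius_diff (rlt_row C d l \<rho> w) S (-S)
      = (\<Sum>j\<in>UNIV. C$l$j * mobius_diff (\<lambda>A. lin_mono \<rho> w (insert j A)) S (-S))
        - d$l * mobius_diff (lin_mono \<rho> w) S (-S)"
    unfolding rlt_row_def by (simp add: mobius_diff_diff mobius_diff_sum mobius_diff_scale)
  also have "(\<Sum>j\<in>UNIV. C$l$j * mobius_diff (\<lambda>A. lin_mono \<rho> w (insert j A)) S (-S))
     = (\<Sum>j\<in>UNIV. C$l$j * (if j \<in> S then 1 else 0) * mobius_diff (lin_mono \<rho> w) S (-S))"
    by (intro sum.cong) (auto simp: mobius_diff_insert_arg_mem mobius_diff_insert_arg_upper)
  also have "\<dots> = (C *v indicator_vec S)$l * mobius_diff (lin_mono \<rho> w) S (-S)"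
    by (simp add: matrix_vector_mult_def indicator_vec_def sum_distrib_right)
  finally show ?thesis
    by (simp add: algebra_simps)
qed

lemma mobius_diff_full_RLT:
  fixes C :: "real^'n::finite^'r::finite"
  assumes bounds: "\<forall>j. (\<exists>l. C$l = axis j 1 \<and> d$l = 0) \<and> (\<exists>l. C$l = - axis j 1 \<and> d$l = -1)"
    and R: "in_scaled_RLT C d CARD('n) \<rho> w"
  shows mobius_diff_full_RLT_nonneg: "0 \<le> mobius_diff (lin_mono \<rho> w) S (-S)"
    and mobius_diff_full_RLT_infeasible:
      "indicator_vec S \<notin> feas_X C d \<Longrightarrow> mobius_diff (lin_mono \<rho> w) S (-S) = 0"
proof -
  let ?\<theta> = "mobius_diff (lin_mono \<rho> w) S (-S)"
  have row: "0 \<le> ((C *v indicator_vec S)$l - d$l) * ?\<theta>" for l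
    using R unfolding in_scaled_RLT_iff_mobius_diff
    by (metis Compl_disjoint Compl_partition mobius_diff_rlt_row_complement)
  have row_eval: "(C *v indicator_vec S)$l = C$l \<bullet> indicator_vec S" for l
    by (simp add: matrix_vector_mult_def inner_vec_def)
  obtain j :: 'n where True
    by blast
  show "0 \<le> ?\<theta>"
  proof (cases "j \<in> S")
    case True
    obtain l where l: "C$l = axis j 1" "d$l = 0"
      using bounds by blast
    have "(C *v indicator_vec S)$l = 1"
      unfolding row_eval l using True by (simp add: inner_axis' indicator_vec_def)
    then show ?thesis
      using row[of l] l by simp
  next
    case False
    obtain l where l: "C$l = - axis j 1" "d$l = -1"
      using bounds by blast
    have "(C *v indicator_vec S)$l = 0"
      unfolding row_eval l using False by (simp add: inner_axis' indicator_vec_def)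
    then show ?thesis
      using row[of l] l by simp
  qed
  assume "indicator_vec S \<notin> feas_X C d"
  moreover have "\<forall>j. indicator_vec S $ j \<in> {0, 1}"
    by (simp add: indicator_vec_def)
  ultimately obtain l where "(C *v indicator_vec S)$l < d$l"
    unfolding feas_X_def by (auto simp: not_le)
  then have "?\<theta> \<le> 0"
    using row[of l] by (smt (verit) mult_neg_pos)
  with \<open>0 \<le> ?\<theta>\<close> show "?\<theta> = 0"
    by simp
qed

lemma in_scaled_RLT_vertex:
  assumes x: "x \<in> feas_X C d" and "0 \<le> \<rho>"
  shows "in_scaled_RLT C d k \<rho> (\<lambda>e. \<rho> * (if e \<subseteq> {j. x$j = 1} then 1 else 0))"
proof -
  define S\<^sub>0 where "S\<^sub>0 = {j. x$j = 1}"
  have x_eq: "x = indicator_vec S\<^sub>0"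
    using x binary_eq_indicator_vec unfolding feas_X_def S\<^sub>0_def by blast
  have "lin_mono \<rho> (\<lambda>e. \<rho> * (if e \<subseteq> S\<^sub>0 then 1 else 0)) = (\<lambda>e. \<rho> * (if e \<subseteq> S\<^sub>0 then 1 else 0))"
    by (auto simp: lin_mono_def)
  then have row: "rlt_row C d l \<rho> (\<lambda>e. \<rho> * (if e \<subseteq> S\<^sub>0 then 1 else 0))
      = (\<lambda>A. (\<rho> * ((C *v x)$l - d$l)) * (if A \<subseteq> S\<^sub>0 then 1 else 0))" for l
    unfolding rlt_row_def x_eq
    by (auto simp: matrix_vector_mult_def indicator_vec_def algebra_simps sum_distrib_left intro!: sum.cong)
  have "0 \<le> \<rho> * ((C *v x)$l - d$l)" for l
    using x \<open>0 \<le> \<rho>\<close> unfolding feas_X_def by simp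
  then show ?thesis
    unfolding in_scaled_RLT_iff_mobius_diff S\<^sub>0_def[symmetric] row
    by (simp add: mobius_diff_scale mobius_diff_indicator)
qed

lemma R_ki_Suc_subset:
  fixes C :: "real^'n::finite^'r::finite"
  assumes "k < CARD('n)"
  shows "R_ki C d a0 a (Suc k) i \<subseteq> R_ki C d a0 a k i"
  unfolding R_ki_def using in_scaled_RLT_Suc_imp[OF assms] by fastforce

lemma proj_R_k_Suc_subset:
  fixes C :: "real^'n::finite^'r::finite"
  assumes "k < CARD('n)"
  shows "proj_R_k C d a0 a (Suc k) \<subseteq> proj_R_k C d a0 a k"
  unfolding proj_R_k_def R_k_def using R_ki_Suc_subset[OF assms] by blast

lemma R_ki_convex_combination:
  assumes "(\<rho>1, y1, u1) \<in> R_ki C d a0 a k i" "(\<rho>2, y2, u2) \<in> R_ki C d a0 a k i"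
    and st: "0 \<le> s" "0 \<le> t" "s + t = 1"
  shows "(s * \<rho>1 + t * \<rho>2, s *\<^sub>R y1 + t *\<^sub>R y2, \<lambda>e. s * u1 e + t * u2 e) \<in> R_ki C d a0 a k i"
proof -
  obtain w1 where w1: "\<rho>1 \<ge> 0" "in_scaled_RLT C d k \<rho>1 w1" "\<forall>j. y1$j = w1 {j}"
    "a0$i * \<rho>1 + (a$i) \<bullet> y1 = 1"
    "\<forall>S. S \<noteq> {} \<and> card S \<le> k \<longrightarrow> u1 S = (a0$i + (\<Sum>j\<in>S. a$i$j)) * w1 S + (\<Sum>r\<in>-S. a$i$r * w1 (insert r S))"
    using assms(1) unfolding R_ki_def by auto
  obtain w2 where w2: "\<rho>2 \<ge> 0" "in_scaled_RLT C d k \<rho>2 w2" "\<forall>j. y2$j = w2 {j}"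
    "a0$i * \<rho>2 + (a$i) \<bullet> y2 = 1"
    "\<forall>S. S \<noteq> {} \<and> card S \<le> k \<longrightarrow> u2 S = (a0$i + (\<Sum>j\<in>S. a$i$j)) * w2 S + (\<Sum>r\<in>-S. a$i$r * w2 (insert r S))"
    using assms(2) unfolding R_ki_def by auto
  define w where "w e = s * w1 e + t * w2 e" for e
  have "lin_mono (s * \<rho>1 + t * \<rho>2) w = (\<lambda>e. s * lin_mono \<rho>1 w1 e + t * lin_mono \<rho>2 w2 e)"
    by (auto simp: lin_mono_def w_def)
  then have "rlt_row C d l (s * \<rho>1 + t * \<rho>2) w
      = (\<lambda>A. s * rlt_row C d l \<rho>1 w1 A + t * rlt_row C d l \<rho>2 w2 A)" for l
    unfolding rlt_row_def by (auto simp: sum.distrib sum_distrib_left algebra_simps)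
  then have "in_scaled_RLT C d k (s * \<rho>1 + t * \<rho>2) w"
    using w1(2) w2(2) st unfolding in_scaled_RLT_iff_mobius_diff by (simp add: mobius_diff_add mobius_diff_scale)
  moreover have "a0$i * (s * \<rho>1 + t * \<rho>2) + (a$i) \<bullet> (s *\<^sub>R y1 + t *\<^sub>R y2)
      = s * (a0$i * \<rho>1 + (a$i) \<bullet> y1) + t * (a0$i * \<rho>2 + (a$i) \<bullet> y2)"
    by (simp add: algebra_simps)
  then have "a0$i * (s * \<rho>1 + t * \<rho>2) + (a$i) \<bullet> (s *\<^sub>R y1 + t *\<^sub>R y2) = 1"
    using w1(4) w2(4) st(3) by simp
  ultimately show ?thesis
    unfolding R_ki_def using st w1 w2
    by (auto intro!: exI[of _ w] simp: w_def sum.distrib sum_distrib_left algebra_simps)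
qed

lemma convex_proj_R_k: "convex (proj_R_k C d a0 a k)"
  unfolding convex_def
proof (intro ballI allI impI)
  fix p q and s t :: real
  assume "p \<in> proj_R_k C d a0 a k" "q \<in> proj_R_k C d a0 a k" and st: "0 \<le> s" "0 \<le> t" "s + t = 1"
  then obtain \<rho>1 y1 u1 \<rho>2 y2 u2 where pq: "p = (\<rho>1, y1)" "q = (\<rho>2, y2)"
    and R: "\<And>i. (\<rho>1$i, y1$i, u1) \<in> R_ki C d a0 a k i" "\<And>i. (\<rho>2$i, y2$i, u2) \<in> R_ki C d a0 a k i"
    unfolding proj_R_k_def R_k_def by blast
  have "\<forall>i. ((s *\<^sub>R \<rho>1 + t *\<^sub>R \<rho>2)$i, (s *\<^sub>R y1 + t *\<^sub>R y2)$i, \<lambda>e. s * u1 e + t * u2 e)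
      \<in> R_ki C d a0 a k i"
    using R_ki_convex_combination[OF R(1) R(2) st] by simp
  then show "s *\<^sub>R p + t *\<^sub>R q \<in> proj_R_k C d a0 a k"
    unfolding pq proj_R_k_def R_k_def by auto
qed

definition G_point :: "real^'m::finite \<Rightarrow> real^'n::finite^'m \<Rightarrow> real^'n \<Rightarrow> (real^'m) \<times> (real^'n^'m)" where
  "G_point a0 a x = ((\<chi> i. 1 / (a0$i + a$i \<bullet> x)), (\<chi> i. \<chi> j. x$j / (a0$i + a$i \<bullet> x)))"

lemma G_set_eq_image: "G_set C d a0 a = G_point a0 a ` feas_X C d"
  unfolding G_set_def G_point_def ..

lemma G_point_in_R_ki:
  assumes x: "x \<in> feas_X C d" and pos: "0 < a0$i + a$i \<bullet> x"
  shows "(fst (G_point a0 a x) $ i, snd (G_point a0 a x) $ i, \<lambda>e. if e \<subseteq> {j. x$j = 1} then 1 else 0)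
           \<in> R_ki C d a0 a k i"
proof -
  define S\<^sub>0 where "S\<^sub>0 = {j. x$j = 1}"
  define D where "D = a0$i + a$i \<bullet> x"
  define w where "w e = 1 / D * (if e \<subseteq> S\<^sub>0 then 1 else 0)" for e
  define \<mu> where "\<mu> S = (if S = S\<^sub>0 then 1 / D else 0)" for S
  have x_eq: "x = indicator_vec S\<^sub>0"
    using x binary_eq_indicator_vec unfolding feas_X_def S\<^sub>0_def by blast
  have "(\<Sum>S\<in>UNIV. if e \<subseteq> S then \<mu> S else 0) = (\<Sum>S\<in>UNIV. if S = S\<^sub>0 then w e else 0)" for e
    by (intro sum.cong) (auto simp: w_def \<mu>_def)
  then have "(a0$i + (\<Sum>j\<in>e. a$i$j)) * w e + (\<Sum>r\<in>-e. a$i$r * w (insert r e))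
      = (\<Sum>S\<in>UNIV. if e \<subseteq> S then \<mu> S * (a0$i + a$i \<bullet> indicator_vec S) else 0)" for e
    by (intro linearized_affine_mobius_expansion) simp
  also have "\<dots> e = (\<Sum>S\<in>UNIV. if S = S\<^sub>0 then (if e \<subseteq> S\<^sub>0 then 1 else 0) else 0)" for e
    using pos by (intro sum.cong) (auto simp: \<mu>_def D_def x_eq)
  finally have u: "(if e \<subseteq> S\<^sub>0 then 1 else 0)
      = (a0$i + (\<Sum>j\<in>e. a$i$j)) * w e + (\<Sum>r\<in>-e. a$i$r * w (insert r e))" for e
    by simp
  have "a$i \<bullet> (\<chi> j. x$j / D) = (a$i \<bullet> x) / D"
    by (simp add: inner_vec_def sum_divide_distrib)
  then have one: "a0$i * (1 / D) + a$i \<bullet> (\<chi> j. x$j / D) = 1"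
    using pos by (simp add: D_def field_simps)
  have rlt: "in_scaled_RLT C d k (1 / D) w"
    unfolding w_def S\<^sub>0_def using in_scaled_RLT_vertex[OF x, of "1 / D"] pos by (simp add: D_def)
  have y: "(\<chi> j. x$j / D) $ j = w {j}" for j
    using x unfolding feas_X_def by (auto simp: w_def S\<^sub>0_def)
  have "0 \<le> 1 / D"
    using pos by (simp add: D_def)
  then have "\<exists>w. 0 \<le> 1 / D \<and> in_scaled_RLT C d k (1 / D) w \<and> (\<forall>j. (\<chi> j. x$j / D) $ j = w {j})
      \<and> a0$i * (1 / D) + a$i \<bullet> (\<chi> j. x$j / D) = 1
      \<and> (\<forall>S. S \<noteq> {} \<and> card S \<le> k \<longrightarrow>
           (if S \<subseteq> S\<^sub>0 then 1 else 0) = (a0$i + (\<Sum>j\<in>S. a$i$j)) * w S + (\<Sum>r\<in>-S. a$i$r * w (insert r S)))"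
    using rlt y one u by blast
  then show ?thesis
    unfolding R_ki_def G_point_def D_def S\<^sub>0_def by simp
qed

lemma G_set_subset_proj_R_k:
  assumes pos: "\<forall>i. \<forall>x\<in>feas_X C d. a0$i + a$i \<bullet> x > 0"
  shows "G_set C d a0 a \<subseteq> proj_R_k C d a0 a k"
  unfolding G_set_eq_image proj_R_k_def R_k_def
  using G_point_in_R_ki pos by (fastforce simp: prod_eq_iff)

lemma R_ki_full_mobius_weights:
  fixes C :: "real^'n::finite^'r::finite"
  assumes bounds: "\<forall>j. (\<exists>l. C$l = axis j 1 \<and> d$l = 0) \<and> (\<exists>l. C$l = - axis j 1 \<and> d$l = -1)"
    and R: "(\<rho>, y, u) \<in> R_ki C d a0 a CARD('n) i"
  shows "\<exists>\<mu>. (\<forall>S. 0 \<le> \<mu> S) \<and> (\<forall>S. indicator_vec S \<notin> feas_X C d \<longrightarrow> \<mu> S = 0)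
    \<and> \<rho> = (\<Sum>S\<in>UNIV. \<mu> S) \<and> y = (\<Sum>S\<in>UNIV. \<mu> S *\<^sub>R indicator_vec S)
    \<and> (\<forall>e. (if e = {} then 1 else u e)
             = (\<Sum>S\<in>UNIV. if e \<subseteq> S then \<mu> S * (a0$i + a$i \<bullet> indicator_vec S) else 0))"
proof -
  obtain w where rlt: "in_scaled_RLT C d CARD('n) \<rho> w" and y: "\<forall>j. y$j = w {j}"
    and one: "a0$i * \<rho> + a$i \<bullet> y = 1"
    and u: "\<forall>S. S \<noteq> {} \<and> card S \<le> CARD('n) \<longrightarrow>
              u S = (a0$i + (\<Sum>j\<in>S. a$i$j)) * w S + (\<Sum>r\<in>-S. a$i$r * w (insert r S))"
    using R unfolding R_ki_def by auto
  define L where "L = lin_mono \<rho> w"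
  define \<mu> where "\<mu> S = mobius_diff L S (-S)" for S
  have L: "L e = (\<Sum>S\<in>UNIV. if e \<subseteq> S then \<mu> S else 0)" for e
    unfolding \<mu>_def by (rule mobius_expansion)
  have "\<rho> = (\<Sum>S\<in>UNIV. \<mu> S)"
    using L[of "{}"] by (simp add: L_def lin_mono_def)
  moreover have "y = (\<Sum>S\<in>UNIV. \<mu> S *\<^sub>R indicator_vec S)"
  proof (rule vec_eq_iff[THEN iffD2, rule_format])
    fix j
    have "y$j = L {j}"
      using y by (simp add: L_def lin_mono_def)
    also have "\<dots> = (\<Sum>S\<in>UNIV. \<mu> S *\<^sub>R indicator_vec S) $ j"
      unfolding L sum_component by (intro sum.cong) (auto simp: indicator_vec_def)
    finally show "y$j = (\<Sum>S\<in>UNIV. \<mu> S *\<^sub>R indicator_vec S) $ j" .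
  qed
  moreover have "(if e = {} then 1 else u e)
      = (\<Sum>S\<in>UNIV. if e \<subseteq> S then \<mu> S * (a0$i + a$i \<bullet> indicator_vec S) else 0)" for e
  proof -
    have "(if e = {} then 1 else u e)
        = (a0$i + (\<Sum>j\<in>e. a$i$j)) * L e + (\<Sum>r\<in>-e. a$i$r * L (insert r e))"
    proof (cases "e = {}")
      case True
      then show ?thesis
        using one y by (simp add: L_def lin_mono_def inner_vec_def)
    next
      case False
      then show ?thesis
        using u card_mono[of UNIV e] by (simp add: L_def lin_mono_def)
    qed
    then show ?thesis
      by (simp only: linearized_affine_mobius_expansion[OF L])
  qed
  moreover have "0 \<le> \<mu> S" "indicator_vec S \<notin> feas_X C d \<Longrightarrow> \<mu> S = 0" for S
    unfolding \<mu>_def L_def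
    using mobius_diff_full_RLT_nonneg[OF bounds rlt] mobius_diff_full_RLT_infeasible[OF bounds rlt] by auto
  ultimately show ?thesis
    by blast
qed

text \<open>Since M depends on u only, the same weights serve every i.\<close>

lemma R_ki_full_eq_mobius_sum:
  fixes C :: "real^'n::finite^'r::finite"
  assumes bounds: "\<forall>j. (\<exists>l. C$l = axis j 1 \<and> d$l = 0) \<and> (\<exists>l. C$l = - axis j 1 \<and> d$l = -1)"
    and pos: "\<forall>x\<in>feas_X C d. a0$i + a$i \<bullet> x > 0"
    and R: "(\<rho>, y, u) \<in> R_ki C d a0 a CARD('n) i"
  defines "M \<equiv> \<lambda>S. mobius_diff (\<lambda>e. if e = {} then 1 else u e) S (-S)"
    and "X \<equiv> {S. indicator_vec S \<in> feas_X C d}"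
    and "D \<equiv> \<lambda>S. a0$i + a$i \<bullet> indicator_vec S"
  shows "\<forall>S\<in>X. 0 \<le> M S" and "(\<Sum>S\<in>X. M S) = 1"
    and "\<rho> = (\<Sum>S\<in>X. M S / D S)" and "y = (\<Sum>S\<in>X. (M S / D S) *\<^sub>R indicator_vec S)"
proof -
  obtain \<mu> where \<mu>_nonneg: "\<forall>S. 0 \<le> \<mu> S"
    and \<mu>_infeasible: "\<forall>S. indicator_vec S \<notin> feas_X C d \<longrightarrow> \<mu> S = 0"
    and \<rho>: "\<rho> = (\<Sum>S\<in>UNIV. \<mu> S)" and y: "y = (\<Sum>S\<in>UNIV. \<mu> S *\<^sub>R indicator_vec S)"
    and u: "\<forall>e. (if e = {} then 1 else u e) = (\<Sum>S\<in>UNIV. if e \<subseteq> S then \<mu> S * D S else 0)"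
    using R_ki_full_mobius_weights[OF bounds R] unfolding D_def by (elim exE conjE)
  have D_pos: "S \<in> X \<Longrightarrow> 0 < D S" for S
    using pos by (auto simp: X_def D_def)
  have M_eq: "M S = \<mu> S * D S" for S
    unfolding M_def by (rule mobius_diff_unique) (use u in blast)
  have \<mu>_eq: "S \<in> X \<Longrightarrow> \<mu> S = M S / D S" for S
    using D_pos[of S] by (simp add: M_eq)
  have weights: "(\<Sum>S\<in>UNIV. \<mu> S *\<^sub>R f S) = (\<Sum>S\<in>X. (M S / D S) *\<^sub>R f S)"
    for f :: "'n set \<Rightarrow> 'v::real_vector"
  proof -
    have "(\<Sum>S\<in>UNIV. \<mu> S *\<^sub>R f S) = (\<Sum>S\<in>X. \<mu> S *\<^sub>R f S)"
      by (rule sum.mono_neutral_right) (auto simp: X_def \<mu>_infeasible)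
    then show ?thesis
      by (simp add: \<mu>_eq)
  qed
  show "\<forall>S\<in>X. 0 \<le> M S"
    using \<mu>_nonneg D_pos by (metis M_eq less_eq_real_def mult_nonneg_nonneg)
  have "1 = (\<Sum>S\<in>UNIV. \<mu> S *\<^sub>R D S)"
    using u[rule_format, of "{}"] by simp
  also have "\<dots> = (\<Sum>S\<in>X. M S)"
    unfolding weights using D_pos by (intro sum.cong) (simp_all add: M_eq)
  finally show "(\<Sum>S\<in>X. M S) = 1"
    by simp
  have "\<rho> = (\<Sum>S\<in>UNIV. \<mu> S *\<^sub>R (1::real))"
    by (simp add: \<rho>)
  also have "\<dots> = (\<Sum>S\<in>X. (M S / D S) *\<^sub>R 1)"
    by (rule weights)
  finally show "\<rho> = (\<Sum>S\<in>X. M S / D S)"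
    by simp
  show "y = (\<Sum>S\<in>X. (M S / D S) *\<^sub>R indicator_vec S)"
    using weights[of indicator_vec] by (simp add: y)
qed

lemma proj_R_k_full_subset_convex_hull:
  fixes C :: "real^'n::finite^'r::finite" and a :: "real^'n^'m::finite"
  assumes bounds: "\<forall>j. (\<exists>l. C$l = axis j 1 \<and> d$l = 0) \<and> (\<exists>l. C$l = - axis j 1 \<and> d$l = -1)"
    and pos: "\<forall>i. \<forall>x\<in>feas_X C d. a0$i + a$i \<bullet> x > 0"
  shows "proj_R_k C d a0 a CARD('n) \<subseteq> convex hull (G_set C d a0 a)"
proof
  fix p
  assume "p \<in> proj_R_k C d a0 a CARD('n)"
  then obtain \<rho> y u where p: "p = (\<rho>, y)" and R: "\<And>i. (\<rho>$i, y$i, u) \<in> R_ki C d a0 a CARD('n) i"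
    unfolding proj_R_k_def R_k_def by blast
  define M where "M S = mobius_diff (\<lambda>e. if e = {} then 1 else u e) S (-S)" for S
  define X where "X = {S. indicator_vec S \<in> feas_X C d}"
  note sum_eq = R_ki_full_eq_mobius_sum[OF bounds pos[THEN spec] R, folded M_def X_def]
  have p_eq: "p = (\<Sum>S\<in>X. M S *\<^sub>R G_point a0 a (indicator_vec S))"
    using sum_eq(3,4) unfolding p
    by (simp add: prod_eq_iff fst_sum snd_sum vec_eq_iff sum_component G_point_def)
  have "G_point a0 a (indicator_vec S) \<in> convex hull (G_set C d a0 a)" if "S \<in> X" for S
    using that by (intro hull_subset[THEN subsetD]) (simp add: G_set_eq_image X_def)
  then show "p \<in> convex hull (G_set C d a0 a)"
    unfolding p_eq using sum_eq(1)
    by (intro convex_sum[OF finite convex_convex_hull sum_eq(2)]) auto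
qed

theorem theorem3:
  fixes C :: "real^'n::finite^'r::finite" and d :: "real^'r"
    and a0 :: "real^'m::finite" and a :: "real^'n^'m"
  assumes bounds: "\<forall>j. (\<exists>l. C$l = axis j 1 \<and> d$l = 0) \<and> (\<exists>l. C$l = - axis j 1 \<and> d$l = -1)"
    and nonempty: "feas_X C d \<noteq> {}"
    and pos: "\<forall>i. \<forall>x\<in>feas_X C d. a0$i + a$i \<bullet> x > 0"
  shows "(\<forall>k. 1 \<le> k \<and> k < CARD('n) \<longrightarrow> proj_R_k C d a0 a (Suc k) \<subseteq> proj_R_k C d a0 a k)
         \<and> proj_R_k C d a0 a CARD('n) = convex hull (G_set C d a0 a)"
proof -
  have "convex hull (G_set C d a0 a) \<subseteq> proj_R_k C d a0 a CARD('n)"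
    using G_set_subset_proj_R_k[OF pos] convex_proj_R_k by (rule hull_minimal)
  then show ?thesis
    using proj_R_k_Suc_subset proj_R_k_full_subset_convex_hull[OF bounds pos] by blast
qed

end
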